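(* In the general DDE setting described in the context, suppose that $F$ maps every subset of $U$ that is bounded with respect to $\|\cdot\|_0$ into a bounded subset of $\mathbb R^N$, and that there exists $K$ such that for every $\phi\in X_+$ there is $T=T(\phi)\ge0$ with $\|x^\phi_t\|_0\le K$ for all $t\ge T$. Then there exists $K'$ such that for every $\phi\in X_+$ there is $t_0=t_0(\phi)\ge0$ with $\|x^\phi_t\|_1\le K'$ for all $t\ge t_0$; i.e. $S_+$ is point dissipative.
   Context: Let $N\in\mathbb N$, $h>0$, $C:=C([-h,0],\mathbb R^N)$ with $\|\phi\|_0:=\max_{\theta\in[-h,0]}|\phi(\theta)|$, $C^1:=C^1([-h,0],\mathbb R^N)$ with $\|\phi\|_1:=\|\phi\|_0+\|\phi'\|_0$; $x_t(s):=x(t+s)$, $s\in[-h,0]$. Let $U\subset C^1$ be open and $F:U\to\mathbb R^N$. Consider $x'(t)=F(x_t)$, $t>0$, $x_0=\phi$; a solution on $[-h,t_* )$ is a $C^1$ map $x$ with $x_0=\phi$, $x_t\in U$ and $x'(t)=F(x_t)$ for $t\in(0,t_* )$. Assume $F$ satisfies (S): $F$ is $C^1$, each $DF(\phi)$ extends to a linear map $D_eF(\phi):C\to\mathbb R^N$ and $(\phi,\chi)\mapsto D_eF(\phi)\chi$ is continuous on $U\times C$. Let $X:=\{\phi\in U:\phi'(0)=F(\phi)\}$; each $\phi\in X$ has a maximal solution $x^\phi$ on $[-h,t_\phi)$ with segments in $X$. Let $U_+\subset U$ be such that $X_+:=X\cap U_+\neq\emptyset$, $x^\phi_t\in X_+$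 for all $\phi\in X_+$, $t\in[0,t_\phi)$; $F$ is (sLb) on $U_+$ (for each $\|\cdot\|_1$-bounded $B\subset U_+$ there is $L_B$ with $|F(\phi)-F(\chi)|\le L_B\|\phi-\chi\|_0$ on $B$); and for every $\phi\in X_+$ the orbit $\{x^\phi_t:t\in[0,t_\phi)\}$ is $\|\cdot\|_1$-bounded with closure in $U$. Under these assumptions $t_\phi=\infty$ for $\phi\in X_+$ and $S_+(t,\phi):=x^\phi_t$ is a continuous semiflow on $X_+$. *)

theory Defs
  imports "HOL-Analysis.Analysis"
begin

text \<open>Segments are functions real => 'a (with 'a a Euclidean space, playing the role of R^N),
  normalised to vanish outside [-h,0].\<close>

definition Cspace :: "real \<Rightarrow> (real \<Rightarrow> 'a::euclidean_space) set" where
  "Cspace h = {\<phi>. continuous_on {-h..0} \<phi> \<and> (\<forall>s. s \<notin> {-h..0} \<longrightarrow> \<phi> s = 0)}"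

definition C1space :: "real \<Rightarrow> (real \<Rightarrow> 'a::euclidean_space) set" where
  "C1space h = {\<phi>. \<phi> \<in> Cspace h \<and>
     (\<exists>\<phi>'. (\<forall>s\<in>{-h..0}. (\<phi> has_vector_derivative \<phi>' s) (at s within {-h..0}))
           \<and> continuous_on {-h..0} \<phi>')}"

definition dseg :: "real \<Rightarrow> (real \<Rightarrow> 'a::euclidean_space) \<Rightarrow> real \<Rightarrow> 'a" where
  "dseg h \<phi> = (\<lambda>s. if s \<in> {-h..0} then vector_derivative \<phi> (at s within {-h..0}) else 0)"

definition norm0 :: "real \<Rightarrow> (real \<Rightarrow> 'a::euclidean_space) \<Rightarrow> real" where
  "norm0 h \<phi> = (SUP s\<in>{-h..0}. norm (\<phi> s))"

definition norm1 :: "real \<Rightarrow> (real \<Rightarrow> 'a::euclidean_space) \<Rightarrow> real" where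
  "norm1 h \<phi> = norm0 h \<phi> + norm0 h (dseg h \<phi>)"

definition seg :: "real \<Rightarrow> (real \<Rightarrow> 'a::euclidean_space) \<Rightarrow> real \<Rightarrow> real \<Rightarrow> 'a" where
  "seg h x t = (\<lambda>s. if s \<in> {-h..0} then x (t + s) else 0)"

definition open1 :: "real \<Rightarrow> (real \<Rightarrow> 'a::euclidean_space) set \<Rightarrow> bool" where
  "open1 h U \<longleftrightarrow> U \<subseteq> C1space h \<and>
     (\<forall>\<phi>\<in>U. \<exists>e>0. \<forall>\<psi>\<in>C1space h. norm1 h (\<lambda>s. \<psi> s - \<phi> s) < e \<longrightarrow> \<psi> \<in> U)"

definition closure1 :: "real \<Rightarrow> (real \<Rightarrow> 'a::euclidean_space) set \<Rightarrow> (real \<Rightarrow> 'a) set" where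
  "closure1 h A = {\<psi>. \<psi> \<in> C1space h \<and> (\<forall>e>0. \<exists>\<xi>\<in>A. norm1 h (\<lambda>s. \<xi> s - \<psi> s) < e)}"

definition bounded1 :: "real \<Rightarrow> (real \<Rightarrow> 'a::euclidean_space) set \<Rightarrow> bool" where
  "bounded1 h B \<longleftrightarrow> (\<exists>M. \<forall>\<phi>\<in>B. norm1 h \<phi> \<le> M)"

definition bounded0 :: "real \<Rightarrow> (real \<Rightarrow> 'a::euclidean_space) set \<Rightarrow> bool" where
  "bounded0 h B \<longleftrightarrow> (\<exists>M. \<forall>\<phi>\<in>B. norm0 h \<phi> \<le> M)"

definition linear_on :: "(real \<Rightarrow> 'a::euclidean_space) set \<Rightarrow> ((real \<Rightarrow> 'a) \<Rightarrow> 'a) \<Rightarrow> bool" where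
  "linear_on V L \<longleftrightarrow> (\<forall>\<xi>\<in>V. \<forall>\<eta>\<in>V. \<forall>c::real.
      L (\<lambda>s. \<xi> s + \<eta> s) = L \<xi> + L \<eta> \<and> L (\<lambda>s. c *\<^sub>R \<xi> s) = c *\<^sub>R L \<xi>)"

definition frechet1 :: "real \<Rightarrow> ((real \<Rightarrow> 'a::euclidean_space) \<Rightarrow> 'a) \<Rightarrow> (real \<Rightarrow> 'a)
                         \<Rightarrow> ((real \<Rightarrow> 'a) \<Rightarrow> 'a) \<Rightarrow> bool" where
  "frechet1 h F \<phi> L \<longleftrightarrow> linear_on (C1space h) L \<and>
     (\<exists>M. \<forall>\<xi>\<in>C1space h. norm (L \<xi>) \<le> M * norm1 h \<xi>) \<and>
     (\<forall>e>0. \<exists>d>0. \<forall>\<psi>\<in>C1space h. norm1 h (\<lambda>s. \<psi> s - \<phi> s) < d \<longrightarrow>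
        norm (F \<psi> - F \<phi> - L (\<lambda>s. \<psi> s - \<phi> s)) \<le> e * norm1 h (\<lambda>s. \<psi> s - \<phi> s))"

definition condS :: "real \<Rightarrow> (real \<Rightarrow> 'a::euclidean_space) set \<Rightarrow> ((real \<Rightarrow> 'a) \<Rightarrow> 'a) \<Rightarrow> bool" where
  "condS h U F \<longleftrightarrow>
    (\<exists>DF DeF.
      (\<forall>\<phi>\<in>U. frechet1 h F \<phi> (DF \<phi>)) \<and>
      (\<forall>\<phi>\<in>U. \<forall>e>0. \<exists>d>0. \<forall>\<psi>\<in>U. norm1 h (\<lambda>s. \<psi> s - \<phi> s) < d \<longrightarrow>
          (\<forall>\<xi>\<in>C1space h. norm (DF \<psi> \<xi> - DF \<phi> \<xi>) \<le> e * norm1 h \<xi>)) \<and>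
      (\<forall>\<phi>\<in>U. linear_on (Cspace h) (DeF \<phi>) \<and> (\<forall>\<xi>\<in>C1space h. DeF \<phi> \<xi> = DF \<phi> \<xi>)) \<and>
      (\<forall>\<phi>\<in>U. \<forall>\<xi>\<in>Cspace h. \<forall>e>0. \<exists>d>0. \<forall>\<psi>\<in>U. \<forall>\<eta>\<in>Cspace h.
          norm1 h (\<lambda>s. \<psi> s - \<phi> s) < d \<and> norm0 h (\<lambda>s. \<eta> s - \<xi> s) < d \<longrightarrow>
          norm (DeF \<psi> \<eta> - DeF \<phi> \<xi>) < e))"

definition Xset :: "real \<Rightarrow> (real \<Rightarrow> 'a::euclidean_space) set \<Rightarrow> ((real \<Rightarrow> 'a) \<Rightarrow> 'a) \<Rightarrow> (real \<Rightarrow> 'a) set" where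
  "Xset h U F = {\<phi>\<in>U. dseg h \<phi> 0 = F \<phi>}"

definition is_solution :: "real \<Rightarrow> (real \<Rightarrow> 'a::euclidean_space) set \<Rightarrow> ((real \<Rightarrow> 'a) \<Rightarrow> 'a)
     \<Rightarrow> (real \<Rightarrow> 'a) \<Rightarrow> (real \<Rightarrow> 'a) \<Rightarrow> ereal \<Rightarrow> bool" where
  "is_solution h U F \<phi> x T \<longleftrightarrow> T > 0 \<and>
     (\<exists>x'. (\<forall>t. -h \<le> t \<and> ereal t < T \<longrightarrow>
              (x has_vector_derivative x' t) (at t within {t. -h \<le> t \<and> ereal t < T}))
          \<and> continuous_on {t. -h \<le> t \<and> ereal t < T} x') \<and>
     seg h x 0 = \<phi> \<and>
     (\<forall>t. 0 < t \<and> ereal t < T \<longrightarrow> seg h x t \<in> U \<and> (x has_vector_derivative F (seg h x t)) (at t))"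

end

theory Submission
  imports Defs
begin

text \<open>Once \<open>|x\<^sub>t|\<^sub>0 \<le> K\<close> for all \<open>t \<ge> T\<close>, the derivative of a segment \<open>x\<^sub>t\<close> with
  \<open>t > T + h\<close> is \<open>s \<mapsto> F(x\<^sub>t\<^sub>+\<^sub>s)\<close>, where every \<open>x\<^sub>t\<^sub>+\<^sub>s\<close> lies in the \<open>|.|\<^sub>0\<close>-ball of radius \<open>K\<close>
  in \<open>U\<close>. Since \<open>F\<close> is bounded there by some \<open>M\<close>, which does not depend on the solution,
  \<open>|x\<^sub>t|\<^sub>1 \<le> K + M\<close> eventually.\<close>

lemma norm0_le:
  assumes "h \<ge> 0" "\<And>s. s \<in> {-h..0} \<Longrightarrow> norm (\<phi> s) \<le> M"
  shows "norm0 h \<phi> \<le> M"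
  unfolding norm0_def using assms by (intro cSUP_least) auto

lemma dseg_seg:
  assumes "h > 0" "s \<in> {-h..0}" "(x has_vector_derivative x') (at (t + s))"
  shows "dseg h (seg h x t) s = x'"
proof -
  have "((\<lambda>r. t + r) has_vector_derivative 1) (at s within {-h..0})"
    by (auto intro!: derivative_eq_intros)
  then have "((x \<circ> (\<lambda>r. t + r)) has_vector_derivative x') (at s within {-h..0})"
    using vector_diff_chain_within[of "\<lambda>r. t + r" 1 s "{-h..0}" x x'] assms(3)
      has_vector_derivative_at_within by fastforce
  then have "(seg h x t has_vector_derivative x') (at s within {-h..0})"
    by (rule has_vector_derivative_transform[OF assms(2), rotated]) (simp add: seg_def)
  then show ?thesis
    unfolding dseg_def using assms(1,2) vector_derivative_within_cbox[of "-h" 0 s] by simp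
qed

lemma is_solutionD:
  assumes "is_solution h U F \<phi> x T" "0 < t" "ereal t < T"
  shows "seg h x t \<in> U" "(x has_vector_derivative F (seg h x t)) (at t)"
  using assms unfolding is_solution_def by blast+

lemma norm1_seg_bound:
  assumes "h > 0"
    and sol: "is_solution h U F \<phi> x \<infinity>"
    and T: "T \<ge> 0" "\<And>t. t \<ge> T \<Longrightarrow> norm0 h (seg h x t) \<le> K"
    and M: "\<And>\<psi>. \<psi> \<in> U \<Longrightarrow> norm0 h \<psi> \<le> K \<Longrightarrow> norm (F \<psi>) \<le> M"
    and t: "t > T + h"
  shows "norm1 h (seg h x t) \<le> K + M"
proof -
  have "norm (dseg h (seg h x t) s) \<le> M" if s: "s \<in> {-h..0}" for s
  proof -
    have "0 < t + s" "T \<le> t + s" using s t T(1) by auto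
    then have "dseg h (seg h x t) s = F (seg h x (t + s))"
      by (intro dseg_seg[OF \<open>h > 0\<close> s] is_solutionD(2)[OF sol]) simp_all
    also have "norm \<dots> \<le> M"
      using M is_solutionD(1)[OF sol] T(2) \<open>0 < t + s\<close> \<open>T \<le> t + s\<close> by simp
    finally show ?thesis .
  qed
  then have "norm0 h (dseg h (seg h x t)) \<le> M"
    using \<open>h > 0\<close> by (intro norm0_le) auto
  moreover have "norm0 h (seg h x t) \<le> K" using T(2) t \<open>h > 0\<close> by simp
  ultimately show ?thesis unfolding norm1_def by simp
qed

lemma norm1_dissipative_if_norm0_dissipative:
  assumes "h > 0"
    and F_bdd: "\<forall>B. B \<subseteq> U \<and> bounded0 h B \<longrightarrow> bounded (F ` B)"
    and diss0: "\<exists>K. \<forall>\<phi>\<in>X. \<forall>x. is_solution h U F \<phi> x \<infinity> \<longrightarrow>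
                   (\<exists>T\<ge>0. \<forall>t\<ge>T. norm0 h (seg h x t) \<le> K)"
  shows "\<exists>K'. \<forall>\<phi>\<in>X. \<forall>x. is_solution h U F \<phi> x \<infinity> \<longrightarrow>
                   (\<exists>t0\<ge>0. \<forall>t\<ge>t0. norm1 h (seg h x t) \<le> K')"
proof -
  obtain K where K: "\<forall>\<phi>\<in>X. \<forall>x. is_solution h U F \<phi> x \<infinity> \<longrightarrow>
                   (\<exists>T\<ge>0. \<forall>t\<ge>T. norm0 h (seg h x t) \<le> K)"
    using diss0 by blast
  have "bounded0 h {\<psi>\<in>U. norm0 h \<psi> \<le> K}"
    unfolding bounded0_def by blast
  then have "bounded (F ` {\<psi>\<in>U. norm0 h \<psi> \<le> K})"
    using F_bdd by simp
  then obtain M where M: "\<And>\<psi>. \<psi> \<in> U \<Longrightarrow> norm0 h \<psi> \<le> K \<Longrightarrow> norm (F \<psi>) \<le> M"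
    by (auto simp: bounded_iff)
  have "\<exists>t0\<ge>0. \<forall>t\<ge>t0. norm1 h (seg h x t) \<le> K + M"
    if \<phi>: "\<phi> \<in> X" and sol: "is_solution h U F \<phi> x \<infinity>" for \<phi> x
  proof -
    obtain T where T: "T \<ge> 0" "\<And>t. t \<ge> T \<Longrightarrow> norm0 h (seg h x t) \<le> K"
      using K \<phi> sol by blast
    have "norm1 h (seg h x t) \<le> K + M" if "t \<ge> T + h + 1" for t
      using norm1_seg_bound[OF \<open>h > 0\<close> sol T M] that by simp
    moreover have "T + h + 1 \<ge> 0" using T(1) \<open>h > 0\<close> by simp
    ultimately show ?thesis by blast
  qed
  then show ?thesis by blast
qed

theorem lemma5:
  fixes h :: real
    and U Uplus :: "(real \<Rightarrow> 'a::euclidean_space) set"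
    and F :: "(real \<Rightarrow> 'a) \<Rightarrow> 'a"
  assumes h_pos: "h > 0"
    and U_open: "open1 h U"
    and S: "condS h U F"
    and Uplus_sub: "Uplus \<subseteq> U"
    and Xplus_ne: "Xset h U F \<inter> Uplus \<noteq> {}"
    and invariant: "\<forall>\<phi>\<in>Xset h U F \<inter> Uplus. \<forall>x T. is_solution h U F \<phi> x T \<longrightarrow>
                      (\<forall>t. 0 \<le> t \<and> ereal t < T \<longrightarrow> seg h x t \<in> Xset h U F \<inter> Uplus)"
    and sLb: "\<forall>B. B \<subseteq> Uplus \<and> bounded1 h B \<longrightarrow>
                 (\<exists>L. \<forall>\<phi>\<in>B. \<forall>\<xi>\<in>B. norm (F \<phi> - F \<xi>) \<le> L * norm0 h (\<lambda>s. \<phi> s - \<xi> s))"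
    and orbits: "\<forall>\<phi>\<in>Xset h U F \<inter> Uplus. \<forall>x T. is_solution h U F \<phi> x T \<longrightarrow>
                   bounded1 h {seg h x t | t. 0 \<le> t \<and> ereal t < T} \<and>
                   closure1 h {seg h x t | t. 0 \<le> t \<and> ereal t < T} \<subseteq> U"
    and F_bdd: "\<forall>B. B \<subseteq> U \<and> bounded0 h B \<longrightarrow> bounded (F ` B)"
    and diss0: "\<exists>K. \<forall>\<phi>\<in>Xset h U F \<inter> Uplus. \<forall>x. is_solution h U F \<phi> x \<infinity> \<longrightarrow>
                   (\<exists>T\<ge>0. \<forall>t\<ge>T. norm0 h (seg h x t) \<le> K)"
  shows "\<exists>K'. \<forall>\<phi>\<in>Xset h U F \<inter> Uplus. \<forall>x. is_solution h U F \<phi> x \<infinity> \<longrightarrow>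
                   (\<exists>t0\<ge>0. \<forall>t\<ge>t0. norm1 h (seg h x t) \<le> K')"
  using norm1_dissipative_if_norm0_dissipative[OF h_pos F_bdd diss0] .

end
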